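(* Let $R$ be a tangible supersemifield, $(q,b)$ a quadratic pair on an $R$-module $V$, $x,y\in V$, and put $\alpha_1=q(x)$, $\alpha_2=q(y)$, $\alpha=b(x,y)$, all assumed nonzero. Choose $\zeta,\eta\in\mathcal T$ with $\alpha\cong_\nu\zeta\alpha_1$ and $\alpha_2\cong_\nu\eta\alpha$. Let $\lambda,\mu\in R$, not both zero. (i) If $\alpha^2>_\nu\alpha_1\alpha_2$ and it is not the case that [$R$ is discrete and $\alpha^2\cong_\nu\pi^{-1}\alpha_1\alpha_2$], then $q(\lambda x+\mu y)=\lambda^2\alpha_1$ if $\lambda>_\nu\zeta\mu$; $=e\lambda^2\alpha_1=e\lambda\mu\alpha$ if $\lambda\cong_\nu\zeta\mu$; $=\lambda\mu\alpha$ if $\eta\mu<_\nu\lambda<_\nu\zeta\mu$; $=e\mu^2\alpha_2=e\lambda\mu\alpha$ if $\lambda\cong_\nu\eta\mu$; $=\mu^2\alpha_2$ if $\lambda<_\nu\eta\mu$. (ii) If $R$ is discrete and $\alpha^2\cong_\nu\pi^{-1}\alpha_1\alpha_2$, then exactly one of $\lambda>_\nu\zeta\mu$, $\lambda\cong_\nu\zeta\mu$, $\lambda\cong_\nu\eta\mu$, $\lambda<_\nu\eta\mu$ holds, and correspondingly $q(\lambda x+\mu y)$ equals $\lambda^2\alpha_1$, $e\lambda^2\alpha_1=e\lambda\mu\alpha$, $e\mu^2\alpha_2=e\lambda\mu\alpha$, $\mu^2\alpha_2$. (iii) If $\alpha^2\le_\nu\alpha_1\alpha_2$, then $q(\lambda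 x+\mu y)=\lambda^2\alpha_1$ if $\lambda^2\alpha_1>_\nu\mu^2\alpha_2$; $=e\lambda^2\alpha_1=e\mu^2\alpha_2$ if $\lambda^2\alpha_1\cong_\nu\mu^2\alpha_2$ (which can only happen if $\alpha_1\alpha_2$ is a $\nu$-square); $=\mu^2\alpha_2$ if $\lambda^2\alpha_1<_\nu\mu^2\alpha_2$.
   Context: All semirings are commutative with $1$. A semiring $R$ is supertropical if $e:=1+1$ satisfies $e+e=e$ and, for all $x,y\in R$: if $ex\neq ey$ then $x+y\in\{x,y\}$, and if $ex=ey$ then $x+y=ey$. $eR$ is totally ordered by $u\le v\iff u+v=v$; write $x\le_\nu y$, $x\cong_\nu y$, $x<_\nu y$ for $ex\le ey$, $ex=ey$, $ex<ey$. $\mathcal T=R\setminus eR$, $\mathcal G=eR\setminus\{0\}$. A tangible supersemifield is a supertropical semiring in which $\mathcal T$ and $\mathcal G$ are groups under multiplication and $e\mathcal T=\mathcal G$. It is discrete if $\mathcal G$ has a smallest element $c_0>e$, and then $\pi\in\mathcal T$ denotes an element with $e\pi^{-1}=c_0$. An element $a\in R$ is a $\nu$-square if $a\cong_\nu d^2$ for some $d\in R$. A quadratic form on an $R$-module $V$ is a map $q:V\to R$ with $q(ax)=a^2q(x)$ such that some symmetric bilinear $b$ satisfies $q(x+y)=q(x)+q(y)+b(x,y)$; $(q,b)$ is a quadratic pair. *)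

theory Defs
  imports Main
begin

text \<open>The semiring R is the whole carrier of a type of class comm_semiring_1
  (commutative, with 1 and absorbing 0).\<close>

definition ee :: "'a::comm_semiring_1" where
  "ee = 1 + 1"

definition supertropical :: "'a::comm_semiring_1 itself \<Rightarrow> bool" where
  "supertropical _ \<longleftrightarrow>
     (ee::'a) + ee = ee \<and>
     (\<forall>x y::'a. (ee * x \<noteq> ee * y \<longrightarrow> x + y \<in> {x, y}) \<and>
                (ee * x = ee * y \<longrightarrow> x + y = ee * y))"

text \<open>The order on eR: u \<le> v iff u + v = v, and the nu-relations.\<close>

definition nu_le :: "'a::comm_semiring_1 \<Rightarrow> 'a \<Rightarrow> bool" where
  "nu_le x y \<longleftrightarrow> ee * x + ee * y = ee * y"

definition nu_eq :: "'a::comm_semiring_1 \<Rightarrow> 'a \<Rightarrow> bool" where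
  "nu_eq x y \<longleftrightarrow> ee * x = ee * y"

definition nu_less :: "'a::comm_semiring_1 \<Rightarrow> 'a \<Rightarrow> bool" where
  "nu_less x y \<longleftrightarrow> nu_le x y \<and> ee * x \<noteq> ee * y"

definition tangibles :: "'a::comm_semiring_1 set" where
  "tangibles = UNIV - range (\<lambda>x. ee * x)"

definition ghosts :: "'a::comm_semiring_1 set" where
  "ghosts = range (\<lambda>x. ee * x) - {0}"

definition mult_group :: "'a::comm_semiring_1 set \<Rightarrow> bool" where
  "mult_group S \<longleftrightarrow>
     (\<forall>x\<in>S. \<forall>y\<in>S. x * y \<in> S) \<and>
     (\<exists>u\<in>S. (\<forall>x\<in>S. u * x = x) \<and> (\<forall>x\<in>S. \<exists>y\<in>S. x * y = u))"

definition tangible_supersemifield :: "'a::comm_semiring_1 itself \<Rightarrow> bool" where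
  "tangible_supersemifield T \<longleftrightarrow>
     supertropical T \<and> mult_group (tangibles::'a set) \<and> mult_group (ghosts::'a set) \<and>
     (\<lambda>x. ee * x) ` (tangibles::'a set) = ghosts"

text \<open>Inverse in the tangible group (whose identity is necessarily 1).\<close>
definition tinv :: "'a::comm_semiring_1 \<Rightarrow> 'a" where
  "tinv x = (SOME y. y \<in> tangibles \<and> x * y = 1)"

definition smallest_above_e :: "'a::comm_semiring_1 \<Rightarrow> bool" where
  "smallest_above_e c0 \<longleftrightarrow> c0 \<in> ghosts \<and> ee + c0 = c0 \<and> c0 \<noteq> ee \<and>
     (\<forall>c\<in>ghosts. (ee + c = c \<and> c \<noteq> ee) \<longrightarrow> c0 + c = c)"

text \<open>pi is a tangible element with e * pi^{-1} = c0; R is discrete iff such pi exists.\<close>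
definition uniformizer :: "'a::comm_semiring_1 \<Rightarrow> bool" where
  "uniformizer p \<longleftrightarrow> p \<in> tangibles \<and> smallest_above_e (ee * tinv p)"

definition discrete :: "'a::comm_semiring_1 itself \<Rightarrow> bool" where
  "discrete _ \<longleftrightarrow> (\<exists>c0::'a. smallest_above_e c0)"

definition nu_square :: "'a::comm_semiring_1 \<Rightarrow> bool" where
  "nu_square a \<longleftrightarrow> (\<exists>d. nu_eq a (d^2))"

definition semimodule :: "('a::comm_semiring_1 \<Rightarrow> 'v::comm_monoid_add \<Rightarrow> 'v) \<Rightarrow> bool" where
  "semimodule sm \<longleftrightarrow>
     (\<forall>a b v. sm (a + b) v = sm a v + sm b v) \<and>
     (\<forall>a v w. sm a (v + w) = sm a v + sm a w) \<and>
     (\<forall>a b v. sm (a * b) v = sm a (sm b v)) \<and>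
     (\<forall>v. sm 1 v = v) \<and> (\<forall>v. sm 0 v = 0) \<and> (\<forall>a. sm a 0 = 0)"

definition symmetric_bilinear ::
  "('a::comm_semiring_1 \<Rightarrow> 'v::comm_monoid_add \<Rightarrow> 'v) \<Rightarrow> ('v \<Rightarrow> 'v \<Rightarrow> 'a) \<Rightarrow> bool" where
  "symmetric_bilinear sm b \<longleftrightarrow>
     (\<forall>x y. b x y = b y x) \<and>
     (\<forall>x x' y. b (x + x') y = b x y + b x' y) \<and>
     (\<forall>a x y. b (sm a x) y = a * b x y)"

definition quadratic_pair ::
  "('a::comm_semiring_1 \<Rightarrow> 'v::comm_monoid_add \<Rightarrow> 'v) \<Rightarrow> ('v \<Rightarrow> 'a) \<Rightarrow> ('v \<Rightarrow> 'v \<Rightarrow> 'a) \<Rightarrow> bool" where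
  "quadratic_pair sm q b \<longleftrightarrow>
     (\<forall>a x. q (sm a x) = a^2 * q x) \<and> symmetric_bilinear sm b \<and>
     (\<forall>x y. q (x + y) = q x + q y + b x y)"

end

theory Submission
  imports Defs
begin

text \<open>By bilinearity \<open>q(\<lambda>x + \<mu>y)\<close> is the supertropical sum of the three monomials
  \<open>\<lambda>\<^sup>2\<alpha>\<^sub>1\<close>, \<open>\<mu>\<^sup>2\<alpha>\<^sub>2\<close> and \<open>\<lambda>\<mu>\<alpha>\<close>, and such a sum is its \<nu>-largest term, or \<open>e\<close> times it
  on a tie. After cancelling \<open>\<lambda>\<alpha>\<^sub>1\<close> resp. \<open>\<mu>\<alpha>\<close>, comparing the cross term with
  \<open>\<lambda>\<^sup>2\<alpha>\<^sub>1\<close> amounts to comparing \<open>\<lambda>\<close> with \<open>\<zeta>\<mu>\<close>, and comparing it with \<open>\<mu>\<^sup>2\<alpha>\<^sub>2\<close> to comparing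
  \<open>\<lambda>\<close> with \<open>\<eta>\<mu>\<close>; moreover \<open>\<alpha>\<^sup>2 >\<^sub>\<nu> \<alpha>\<^sub>1\<alpha>\<^sub>2\<close> says exactly \<open>\<eta> <\<^sub>\<nu> \<zeta>\<close>. So in (i) the five cases
  are the positions of \<open>\<lambda>\<close> relative to \<open>\<eta>\<mu> <\<^sub>\<nu> \<zeta>\<mu>\<close>. In the discrete case (ii) one gets
  \<open>\<zeta> \<cong>\<^sub>\<nu> \<pi>\<^sup>-\<^sup>1\<eta>\<close>, and nothing lies \<nu>-strictly between \<open>\<eta>\<mu>\<close> and \<open>\<pi>\<^sup>-\<^sup>1\<eta>\<mu>\<close>, which removes the
  middle case. In (iii) the square of the cross term is \<nu>-dominated by the product of the other two,
  so the cross term never wins.\<close>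

subsection \<open>The \<nu>-order\<close>

lemma nu_le_antisym: "nu_le x y \<Longrightarrow> nu_le y x \<Longrightarrow> nu_eq x y"
  unfolding nu_le_def nu_eq_def by (metis add.commute)

lemma nu_le_trans [trans]: "nu_le x y \<Longrightarrow> nu_le y z \<Longrightarrow> nu_le x z"
  unfolding nu_le_def by (metis add.assoc)

lemma nu_less_imp_le: "nu_less x y \<Longrightarrow> nu_le x y"
  unfolding nu_less_def by simp

lemma nu_less_imp_not_eq: "nu_less x y \<Longrightarrow> \<not> nu_eq x y"
  unfolding nu_less_def nu_eq_def by simp

lemma nu_less_asym: "nu_less x y \<Longrightarrow> \<not> nu_less y x"
  using nu_le_antisym unfolding nu_less_def nu_eq_def by blast

lemma nu_less_le_trans [trans]: "nu_less x y \<Longrightarrow> nu_le y z \<Longrightarrow> nu_less x z"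
  unfolding nu_less_def nu_le_def by (metis add.assoc add.commute)

lemma nu_le_less_trans [trans]: "nu_le x y \<Longrightarrow> nu_less y z \<Longrightarrow> nu_less x z"
  unfolding nu_less_def nu_le_def by (metis add.assoc add.commute)

lemma nu_less_trans [trans]: "nu_less x y \<Longrightarrow> nu_less y z \<Longrightarrow> nu_less x z"
  using nu_less_imp_le nu_less_le_trans by blast

lemma nu_eq_refl: "nu_eq x x"
  unfolding nu_eq_def ..

lemma nu_eq_sym: "nu_eq x y \<Longrightarrow> nu_eq y x"
  unfolding nu_eq_def by simp

lemma nu_less_cong: "nu_eq x x' \<Longrightarrow> nu_eq y y' \<Longrightarrow> nu_less x y \<longleftrightarrow> nu_less x' y'"
  unfolding nu_eq_def nu_less_def nu_le_def by simp

lemma nu_le_mult_left: "nu_le x y \<Longrightarrow> nu_le (z * x) (z * y)"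
  unfolding nu_le_def by (metis distrib_left mult.left_commute)

lemma nu_eq_mult_left: "nu_eq x y \<Longrightarrow> nu_eq (z * x) (z * y)"
  unfolding nu_eq_def by (metis mult.left_commute)

lemma nu_le_square: "nu_le x y \<Longrightarrow> nu_le (x * x) (y * y)"
  by (metis nu_le_mult_left nu_le_trans mult.commute)

lemma one_nu_less_step: "smallest_above_e (ee * t) \<Longrightarrow> nu_less 1 t"
  unfolding smallest_above_e_def nu_less_def nu_le_def by auto

context
  assumes S: "supertropical TYPE('a::comm_semiring_1)"
begin

lemma ee_add_ee: "(ee::'a) + ee = ee"
  using S unfolding supertropical_def by blast

lemma ee_mult_ee_mult: "(ee::'a) * (ee * x) = ee * x"
proof -
  have "(ee::'a) * ee = ee + ee" by (simp add: ee_def distrib_right)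
  then show ?thesis using ee_add_ee by (metis mult.assoc)
qed

lemma nu_le_refl: "nu_le (x::'a) x"
  unfolding nu_le_def using ee_add_ee by (metis distrib_right)

lemma nu_eq_imp_le: "nu_eq (x::'a) y \<Longrightarrow> nu_le x y"
  using nu_le_refl[of y] unfolding nu_eq_def nu_le_def by simp

lemma nu_le_total: "nu_le (x::'a) y \<or> nu_le y x"
proof (cases "ee * x = ee * y")
  case True
  then show ?thesis using nu_le_refl[of x] unfolding nu_le_def by simp
next
  case False
  then have "ee * (ee * x) \<noteq> ee * (ee * y)" by (simp add: ee_mult_ee_mult)
  then have "ee * x + ee * y \<in> {ee * x, ee * y}" using S unfolding supertropical_def by blast
  then show ?thesis unfolding nu_le_def by (auto simp: add.commute)
qed

lemma not_nu_less_iff: "\<not> nu_less (x::'a) y \<longleftrightarrow> nu_le y x"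
  using nu_le_total[of x y] nu_le_refl[of x] nu_le_antisym
  unfolding nu_less_def nu_le_def nu_eq_def by metis

lemma nu_trichotomy: "nu_less (x::'a) y \<or> nu_eq x y \<or> nu_less y x"
  using nu_le_total[of x y] unfolding nu_less_def nu_le_def nu_eq_def by auto

lemma add_nu_less: "nu_less (x::'a) y \<Longrightarrow> x + y = y"
proof -
  assume "nu_less x y"
  then have ne: "ee * x \<noteq> ee * y" and le: "ee * x + ee * y = ee * y"
    unfolding nu_less_def nu_le_def by auto
  then have "x + y \<in> {x, y}" using S unfolding supertropical_def by blast
  moreover have "x + y \<noteq> x"
    using ne le by (metis distrib_left)
  ultimately show ?thesis by blast
qed

lemma add_nu_eq: "nu_eq (x::'a) y \<Longrightarrow> x + y = ee * y"
  using S unfolding supertropical_def nu_eq_def by blast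

lemma add3_nu_less: "nu_less (x::'a) z \<Longrightarrow> nu_less y z \<Longrightarrow> x + y + z = z"
proof -
  assume "nu_less x z" "nu_less y z"
  moreover have "ee * (x + y) = ee * y \<or> ee * (x + y) = ee * x"
    using nu_le_total[of x y] unfolding nu_le_def by (auto simp: distrib_left add.commute)
  ultimately have "nu_less (x + y) z" unfolding nu_less_def nu_le_def by auto
  then show ?thesis by (rule add_nu_less)
qed

lemma add3_nu_eq: "nu_eq (x::'a) z \<Longrightarrow> nu_le y z \<Longrightarrow> x + y + z = ee * z"
proof -
  assume xz: "nu_eq x z" and yz: "nu_le y z"
  have "x + y + z = y + (x + z)" by (simp add: ac_simps)
  also have "\<dots> = y + ee * z" using add_nu_eq[OF xz] by simp
  also have "\<dots> = ee * z"
  proof (cases "nu_less y z")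
    case True
    then have "nu_less y (ee * z)" unfolding nu_less_def nu_le_def by (simp add: ee_mult_ee_mult)
    then show ?thesis by (rule add_nu_less)
  next
    case False
    then have "nu_eq y (ee * z)"
      using yz not_nu_less_iff nu_le_antisym unfolding nu_eq_def by (metis ee_mult_ee_mult)
    then show ?thesis using add_nu_eq ee_mult_ee_mult by metis
  qed
  finally show ?thesis .
qed

lemma nu_four_cases:
  assumes uv: "nu_less u v" and gap: "\<not> (nu_less u l \<and> nu_less l (v::'a))"
  shows "(nu_less v l \<or> nu_eq l v \<or> nu_eq l u \<or> nu_less l u) \<and>
    \<not> (nu_less v l \<and> nu_eq l v) \<and> \<not> (nu_less v l \<and> nu_eq l u) \<and> \<not> (nu_less v l \<and> nu_less l u) \<and>
    \<not> (nu_eq l v \<and> nu_eq l u) \<and> \<not> (nu_eq l v \<and> nu_less l u) \<and> \<not> (nu_eq l u \<and> nu_less l u)"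
proof -
  have "nu_less v l \<or> nu_eq l v \<or> nu_eq l u \<or> nu_less l u"
    using nu_trichotomy[of l v] nu_trichotomy[of l u] gap by blast
  moreover have "\<not> (nu_eq l v \<and> nu_eq l u)"
    using uv nu_less_imp_not_eq unfolding nu_eq_def by metis
  moreover have "\<not> (nu_less v l \<and> nu_eq l u)"
    using uv nu_less_trans nu_less_cong[OF _ nu_eq_refl] nu_less_asym by metis
  moreover have "\<not> (nu_eq l v \<and> nu_less l u)"
    using uv nu_less_cong[OF nu_eq_refl] nu_less_asym by metis
  ultimately show ?thesis
    using uv nu_less_imp_not_eq nu_less_asym nu_less_trans nu_eq_sym by metis
qed

end

definition binary_form :: "'a::comm_semiring_1 \<Rightarrow> 'a \<Rightarrow> 'a \<Rightarrow> 'a \<Rightarrow> 'a \<Rightarrow> 'a" where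
  "binary_form a1 a2 a l m = l^2 * a1 + m^2 * a2 + l * m * a"

lemma quadratic_pair_add_smult:
  assumes "quadratic_pair sm q b"
  shows "q (sm l x + sm m y) = binary_form (q x) (q y) (b x y) l m"
proof -
  have "b (sm l x) (sm m y) = l * (m * b x y)"
    using assms unfolding quadratic_pair_def symmetric_bilinear_def by metis
  then show ?thesis using assms unfolding quadratic_pair_def binary_form_def by (simp add: mult.assoc)
qed

subsection \<open>Tangible supersemifields\<close>

lemma tangible_neq_0: "t \<in> tangibles \<Longrightarrow> t \<noteq> 0"
  unfolding tangibles_def by (metis DiffE mult_zero_right rangeI)

context
  assumes R: "tangible_supersemifield TYPE('a::comm_semiring_1)"
begin

lemma tangible_supersemifield_supertropical: "supertropical TYPE('a)"
  using R unfolding tangible_supersemifield_def by simp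

lemma ghosts_mult_group: "mult_group (ghosts::'a set)"
  using R unfolding tangible_supersemifield_def by simp

lemma ee_mult_tangibles: "(\<lambda>x. ee * x) ` (tangibles::'a set) = ghosts"
  using R unfolding tangible_supersemifield_def by simp

lemma ee_neq_0: "(ee::'a) \<noteq> 0"
  using ghosts_mult_group unfolding mult_group_def ghosts_def by auto

lemma ee_mult_neq_0: "(x::'a) \<noteq> 0 \<Longrightarrow> ee * x \<noteq> 0"
proof (cases "x \<in> tangibles")
  case True
  then show ?thesis using ee_mult_tangibles unfolding ghosts_def by blast
next
  case False
  then obtain z where "x = ee * z" unfolding tangibles_def by auto
  then show "x \<noteq> 0 \<Longrightarrow> ?thesis"
    using ee_mult_ee_mult[OF tangible_supersemifield_supertropical] by simp
qed

lemma ee_mult_in_ghosts: "(x::'a) \<noteq> 0 \<Longrightarrow> ee * x \<in> ghosts"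
  using ee_mult_neq_0 unfolding ghosts_def by auto

text \<open>The identity of the ghost group is \<open>ee\<close>, since it is idempotent.\<close>

lemma ex_nu_inverse: "(x::'a) \<noteq> 0 \<Longrightarrow> \<exists>s. ee * (s * x) = ee"
proof -
  assume "x \<noteq> 0"
  obtain u where u: "u \<in> (ghosts::'a set)" "\<forall>g\<in>ghosts. u * g = g"
    "\<forall>g\<in>ghosts. \<exists>h\<in>ghosts. g * h = u"
    using ghosts_mult_group unfolding mult_group_def by blast
  have "u * ee = ee" using u(2) ee_mult_in_ghosts[of 1] by simp
  moreover obtain z where "u = ee * z" using u(1) unfolding ghosts_def by auto
  ultimately have "u = ee"
    using ee_mult_ee_mult[OF tangible_supersemifield_supertropical] by (metis mult.commute)
  moreover obtain h where "h \<in> ghosts" "ee * x * h = u"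
    using u(3) ee_mult_in_ghosts[OF \<open>x \<noteq> 0\<close>] by blast
  moreover obtain s where "h = ee * s" using \<open>h \<in> ghosts\<close> unfolding ghosts_def by auto
  ultimately show ?thesis
    using ee_mult_ee_mult[OF tangible_supersemifield_supertropical] by (metis mult.assoc mult.commute)
qed

lemma mult_neq_0: "(x::'a) \<noteq> 0 \<Longrightarrow> y \<noteq> 0 \<Longrightarrow> x * y \<noteq> 0"
proof -
  assume "x \<noteq> 0" "y \<noteq> 0"
  then have "(ee * x) * (ee * y) \<in> ghosts"
    using ee_mult_in_ghosts ghosts_mult_group unfolding mult_group_def by blast
  moreover have "(ee * x) * (ee * y) = ee * (ee * (x * y))" by (simp add: mult_ac)
  ultimately show ?thesis unfolding ghosts_def by auto
qed

lemma power2_neq_0: "(x::'a) \<noteq> 0 \<Longrightarrow> x ^ 2 \<noteq> 0"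
  by (simp add: power2_eq_square mult_neq_0)

lemma nu_le_mult_left_iff: "(z::'a) \<noteq> 0 \<Longrightarrow> nu_le (z * x) (z * y) \<longleftrightarrow> nu_le x y"
proof
  assume "z \<noteq> 0" "nu_le (z * x) (z * y)"
  obtain s where "ee * (s * z) = ee" using ex_nu_inverse[OF \<open>z \<noteq> 0\<close>] by blast
  then have "nu_le ((s * z) * x) ((s * z) * y)"
    using nu_le_mult_left[OF \<open>nu_le (z * x) (z * y)\<close>, of s] by (simp add: mult.assoc)
  then show "nu_le x y" using \<open>ee * (s * z) = ee\<close> unfolding nu_le_def by (metis mult.assoc)
qed (rule nu_le_mult_left)

lemma nu_eq_mult_left_iff: "(z::'a) \<noteq> 0 \<Longrightarrow> nu_eq (z * x) (z * y) \<longleftrightarrow> nu_eq x y"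
proof
  assume "z \<noteq> 0" "nu_eq (z * x) (z * y)"
  obtain s where "ee * (s * z) = ee" using ex_nu_inverse[OF \<open>z \<noteq> 0\<close>] by blast
  then have "nu_eq ((s * z) * x) ((s * z) * y)"
    using nu_eq_mult_left[OF \<open>nu_eq (z * x) (z * y)\<close>, of s] by (simp add: mult.assoc)
  then show "nu_eq x y" using \<open>ee * (s * z) = ee\<close> unfolding nu_eq_def by (metis mult.assoc)
qed (rule nu_eq_mult_left)

lemma nu_less_mult_left_iff: "(z::'a) \<noteq> 0 \<Longrightarrow> nu_less (z * x) (z * y) \<longleftrightarrow> nu_less x y"
  using nu_le_mult_left_iff nu_eq_mult_left_iff unfolding nu_less_def nu_eq_def by blast

lemma nu_less_scaled_iff:
  "nu_eq X (k * u) \<Longrightarrow> nu_eq Y (k * v) \<Longrightarrow> (k::'a) \<noteq> 0 \<Longrightarrow> nu_less X Y \<longleftrightarrow> nu_less u v"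
  using nu_less_cong nu_less_mult_left_iff by blast

lemma nu_eq_scaled_iff:
  "nu_eq X (k * u) \<Longrightarrow> nu_eq Y (k * v) \<Longrightarrow> (k::'a) \<noteq> 0 \<Longrightarrow> nu_eq X Y \<longleftrightarrow> nu_eq u v"
  using nu_eq_mult_left_iff unfolding nu_eq_def by metis

lemma nu_le_0_iff: "nu_le (x::'a) 0 \<longleftrightarrow> x = 0"
  unfolding nu_le_def using ee_mult_neq_0 by force

lemma nu_eq_0_iff: "nu_eq (x::'a) 0 \<longleftrightarrow> x = 0" "nu_eq 0 x \<longleftrightarrow> x = 0"
  unfolding nu_eq_def using ee_mult_neq_0 by force+

lemma nu_less_0_iff: "nu_less 0 (x::'a) \<longleftrightarrow> x \<noteq> 0" "\<not> nu_less x 0"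
  using nu_le_0_iff nu_eq_0_iff unfolding nu_less_def nu_le_def nu_eq_def by auto

lemma nu_less_square: "nu_less x y \<Longrightarrow> nu_less ((x::'a) * x) (y * y)"
proof -
  assume xy: "nu_less x y"
  then have "y \<noteq> 0" using nu_less_0_iff(2) by blast
  have "nu_le (x * x) (y * x)"
    using nu_le_mult_left[OF nu_less_imp_le[OF xy]] by (simp add: mult.commute)
  moreover have "nu_less (y * x) (y * y)" using nu_less_mult_left_iff[OF \<open>y \<noteq> 0\<close>] xy by blast
  ultimately show ?thesis by (rule nu_le_less_trans)
qed

subsection \<open>The three regimes\<close>

lemma discriminant_nu_less_iff:
  assumes "a1 \<noteq> 0" "a \<noteq> 0" "nu_eq a (\<zeta> * a1)" "nu_eq a2 (\<eta> * a)"
  shows "nu_less (a1 * a2) (a^2) \<longleftrightarrow> nu_less \<eta> (\<zeta>::'a)"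
proof (rule nu_less_scaled_iff)
  show "nu_eq (a1 * a2) ((a1 * a) * \<eta>)"
    using nu_eq_mult_left[OF assms(4), of a1] by (simp add: mult_ac)
  show "nu_eq (a^2) ((a1 * a) * \<zeta>)"
    using nu_eq_mult_left[OF assms(3), of a] by (simp add: mult_ac power2_eq_square)
  show "a1 * a \<noteq> 0" using assms(1,2) by (rule mult_neq_0)
qed

lemma binary_form_monomials_compare:
  fixes a1 a2 a \<zeta> \<eta> l m :: 'a
  assumes "a1 \<noteq> 0" "a \<noteq> 0" "l \<noteq> 0" "m \<noteq> 0"
    and zeta: "nu_eq a (\<zeta> * a1)" and eta: "nu_eq a2 (\<eta> * a)"
  shows "nu_less (l * m * a) (l^2 * a1) \<longleftrightarrow> nu_less (\<zeta> * m) l"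
    and "nu_less (l^2 * a1) (l * m * a) \<longleftrightarrow> nu_less l (\<zeta> * m)"
    and "nu_eq (l^2 * a1) (l * m * a) \<longleftrightarrow> nu_eq l (\<zeta> * m)"
    and "nu_less (m^2 * a2) (l * m * a) \<longleftrightarrow> nu_less (\<eta> * m) l"
    and "nu_less (l * m * a) (m^2 * a2) \<longleftrightarrow> nu_less l (\<eta> * m)"
    and "nu_eq (m^2 * a2) (l * m * a) \<longleftrightarrow> nu_eq l (\<eta> * m)"
proof -
  have k: "l * a1 \<noteq> 0" "m * a \<noteq> 0" using assms(1-4) by (simp_all add: mult_neq_0)
  have A: "nu_eq (l^2 * a1) ((l * a1) * l)" by (simp add: nu_eq_def power2_eq_square mult_ac)
  have CA: "nu_eq (l * m * a) ((l * a1) * (\<zeta> * m))"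
    using nu_eq_mult_left[OF zeta, of "l * m"] by (simp add: mult_ac)
  have B: "nu_eq (m^2 * a2) ((m * a) * (\<eta> * m))"
    using nu_eq_mult_left[OF eta, of "m^2"] by (simp add: mult_ac power2_eq_square)
  have CB: "nu_eq (l * m * a) ((m * a) * l)" by (simp add: nu_eq_def mult_ac)
  show "nu_less (l * m * a) (l^2 * a1) \<longleftrightarrow> nu_less (\<zeta> * m) l"
    "nu_less (l^2 * a1) (l * m * a) \<longleftrightarrow> nu_less l (\<zeta> * m)"
    "nu_eq (l^2 * a1) (l * m * a) \<longleftrightarrow> nu_eq l (\<zeta> * m)"
    "nu_less (m^2 * a2) (l * m * a) \<longleftrightarrow> nu_less (\<eta> * m) l"
    "nu_less (l * m * a) (m^2 * a2) \<longleftrightarrow> nu_less l (\<eta> * m)"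
    using nu_less_scaled_iff[OF CA A k(1)] nu_less_scaled_iff[OF A CA k(1)]
      nu_eq_scaled_iff[OF A CA k(1)] nu_less_scaled_iff[OF B CB k(2)]
      nu_less_scaled_iff[OF CB B k(2)] by simp_all
  show "nu_eq (m^2 * a2) (l * m * a) \<longleftrightarrow> nu_eq l (\<eta> * m)"
    using nu_eq_scaled_iff[OF B CB k(2)] nu_eq_sym by blast
qed

lemma binary_form_eta_nu_less_zeta:
  fixes a1 a2 a \<zeta> \<eta> l m :: 'a
  assumes nz: "a1 \<noteq> 0" "a \<noteq> 0" "\<zeta> \<noteq> 0" "\<eta> \<noteq> 0"
    and zeta: "nu_eq a (\<zeta> * a1)" and eta: "nu_eq a2 (\<eta> * a)"
    and eta_zeta: "nu_less \<eta> \<zeta>" and lm: "l \<noteq> 0 \<or> m \<noteq> 0"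
  defines "Q \<equiv> binary_form a1 a2 a l m"
  shows "(nu_less (\<zeta> * m) l \<longrightarrow> Q = l^2 * a1) \<and>
    (nu_eq l (\<zeta> * m) \<longrightarrow> Q = ee * l^2 * a1 \<and> Q = ee * l * m * a) \<and>
    (nu_less (\<eta> * m) l \<and> nu_less l (\<zeta> * m) \<longrightarrow> Q = l * m * a) \<and>
    (nu_eq l (\<eta> * m) \<longrightarrow> Q = ee * m^2 * a2 \<and> Q = ee * l * m * a) \<and>
    (nu_less l (\<eta> * m) \<longrightarrow> Q = m^2 * a2)"
proof (cases "l = 0 \<or> m = 0")
  case True
  then show ?thesis
    using nz lm by (auto simp: Q_def binary_form_def nu_eq_0_iff nu_less_0_iff mult_neq_0)
next
  case False
  have S: "supertropical TYPE('a)" by (rule tangible_supersemifield_supertropical)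
  define A B C where "A = l^2 * a1" and "B = m^2 * a2" and "C = l * m * a"
  have Q: "Q = A + B + C" by (simp add: Q_def A_def B_def C_def binary_form_def)
  have ee_ABC: "ee * l^2 * a1 = ee * A" "ee * m^2 * a2 = ee * B" "ee * l * m * a = ee * C"
    by (simp_all add: A_def B_def C_def mult.assoc)
  have lm_nz: "l \<noteq> 0" "m \<noteq> 0" using False by simp_all
  note compare = binary_form_monomials_compare[OF nz(1,2) lm_nz zeta eta, folded A_def B_def C_def]
  note CA = compare(1-3) and CB = compare(4-6)
  have em: "nu_less (\<eta> * m) (\<zeta> * m)"
    using eta_zeta nu_less_mult_left_iff[OF lm_nz(2)] by (simp add: mult.commute)
  have "Q = A" if "nu_less (\<zeta> * m) l"
  proof -
    have "nu_less C A" "nu_less B C" using CA CB that nu_less_trans[OF em that] by simp_all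
    then have "B + C + A = A" using add3_nu_less[OF S] nu_less_trans by blast
    then show ?thesis by (simp add: Q ac_simps)
  qed
  moreover have "Q = ee * A \<and> Q = ee * C" if "nu_eq l (\<zeta> * m)"
  proof -
    have "nu_less (\<eta> * m) l" using em that nu_eq_imp_le[OF S] nu_eq_sym nu_less_le_trans by metis
    then have "nu_eq A C" "nu_le B C" using CA CB that nu_less_imp_le by simp_all
    then have "A + B + C = ee * C" "ee * A = ee * C" using add3_nu_eq[OF S] unfolding nu_eq_def
      by blast+
    then show ?thesis by (simp add: Q)
  qed
  moreover have "Q = C" if "nu_less (\<eta> * m) l" "nu_less l (\<zeta> * m)"
    using add3_nu_less[OF S] CA CB that Q by simp
  moreover have "Q = ee * B \<and> Q = ee * C" if "nu_eq l (\<eta> * m)"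
  proof -
    have "nu_less l (\<zeta> * m)" using em that nu_eq_imp_le[OF S] nu_le_less_trans by metis
    then have "nu_eq B C" "nu_le A C" using CA CB that nu_less_imp_le by simp_all
    then have "B + A + C = ee * C" "ee * B = ee * C" using add3_nu_eq[OF S] unfolding nu_eq_def
      by blast+
    then show ?thesis by (simp add: Q ac_simps)
  qed
  moreover have "Q = B" if "nu_less l (\<eta> * m)"
  proof -
    have "nu_less C B" "nu_less A C" using CA CB that nu_less_trans[OF that em] by simp_all
    then have "A + C + B = B" using add3_nu_less[OF S] nu_less_trans by blast
    then show ?thesis by (simp add: Q ac_simps)
  qed
  ultimately show ?thesis unfolding ee_ABC unfolding A_def B_def C_def by blast
qed

text \<open>For \<open>g \<noteq> 0\<close>, an element \<nu>-strictly between \<open>g\<close> and \<open>t * g\<close> would give, after scaling by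
  a \<nu>-inverse of \<open>g\<close>, a ghost strictly between \<open>ee\<close> and the smallest ghost above \<open>ee\<close>.\<close>

lemma no_nu_between_step:
  assumes step: "smallest_above_e (ee * t)" and "(g::'a) \<noteq> 0"
  shows "\<not> (nu_less g l \<and> nu_less l (t * g))"
proof
  assume between: "nu_less g l \<and> nu_less l (t * g)"
  obtain s where s: "ee * (s * g) = ee" using ex_nu_inverse[OF \<open>g \<noteq> 0\<close>] by blast
  then have "s \<noteq> 0" using ee_neq_0 by auto
  define c where "c = ee * (s * l)"
  have "nu_less (s * g) (s * l)" "nu_less (s * l) (s * (t * g))"
    using between nu_less_mult_left_iff[OF \<open>s \<noteq> 0\<close>] by auto
  moreover have "ee * (s * (t * g)) = ee * t" using s by (metis mult.left_commute mult.commute)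
  ultimately have "ee + c = c" "c \<noteq> ee" "c + ee * t = ee * t" "c \<noteq> ee * t"
    using s unfolding nu_less_def nu_le_def c_def by auto
  moreover have "c \<in> ghosts" using \<open>ee + c = c\<close> ee_neq_0 unfolding ghosts_def c_def by auto
  ultimately show False using step unfolding smallest_above_e_def by (metis add.commute)
qed

lemma binary_form_discrete:
  fixes a1 a2 a \<zeta> \<eta> l m t :: 'a
  assumes nz: "a1 \<noteq> 0" "a2 \<noteq> 0" "a \<noteq> 0" "\<zeta> \<noteq> 0" "\<eta> \<noteq> 0"
    and zeta: "nu_eq a (\<zeta> * a1)" and eta: "nu_eq a2 (\<eta> * a)" and lm: "l \<noteq> 0 \<or> m \<noteq> 0"
    and step: "smallest_above_e (ee * t)" and disc: "nu_eq (a^2) (t * a1 * a2)"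
  defines "Q \<equiv> binary_form a1 a2 a l m"
  shows "(nu_less (\<zeta> * m) l \<or> nu_eq l (\<zeta> * m) \<or> nu_eq l (\<eta> * m) \<or> nu_less l (\<eta> * m)) \<and>
    \<not> (nu_less (\<zeta> * m) l \<and> nu_eq l (\<zeta> * m)) \<and> \<not> (nu_less (\<zeta> * m) l \<and> nu_eq l (\<eta> * m)) \<and>
    \<not> (nu_less (\<zeta> * m) l \<and> nu_less l (\<eta> * m)) \<and>
    \<not> (nu_eq l (\<zeta> * m) \<and> nu_eq l (\<eta> * m)) \<and> \<not> (nu_eq l (\<zeta> * m) \<and> nu_less l (\<eta> * m)) \<and>
    \<not> (nu_eq l (\<eta> * m) \<and> nu_less l (\<eta> * m)) \<and>
    (nu_less (\<zeta> * m) l \<longrightarrow> Q = l^2 * a1) \<and>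
    (nu_eq l (\<zeta> * m) \<longrightarrow> Q = ee * l^2 * a1 \<and> Q = ee * l * m * a) \<and>
    (nu_eq l (\<eta> * m) \<longrightarrow> Q = ee * m^2 * a2 \<and> Q = ee * l * m * a) \<and>
    (nu_less l (\<eta> * m) \<longrightarrow> Q = m^2 * a2)"
proof -
  have "nu_less ((a1 * a2) * 1) ((a1 * a2) * t)"
    using nu_less_mult_left_iff one_nu_less_step[OF step] nz mult_neq_0 by blast
  moreover have "nu_eq ((a1 * a2) * t) (a^2)"
    using disc unfolding nu_eq_def by (simp add: mult_ac)
  ultimately have "nu_less (a1 * a2) (a^2)"
    unfolding nu_less_def nu_le_def nu_eq_def by simp
  then have eta_zeta: "nu_less \<eta> \<zeta>" using discriminant_nu_less_iff[OF nz(1,3) zeta eta] by simp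
  note evaluation = binary_form_eta_nu_less_zeta[OF nz(1,3,4,5) zeta eta eta_zeta lm, folded Q_def]
  have "nu_eq ((a1 * a) * \<zeta>) ((a1 * a) * (t * \<eta>))"
    using disc nu_eq_mult_left[OF zeta, of a] nu_eq_mult_left[OF eta, of "t * a1"]
    unfolding nu_eq_def by (simp add: power2_eq_square mult_ac)
  then have "nu_eq \<zeta> (t * \<eta>)" using nu_eq_mult_left_iff nz mult_neq_0 by blast
  then have zeta_step: "nu_eq (\<zeta> * m) (t * (\<eta> * m))"
    using nu_eq_mult_left[of \<zeta> "t * \<eta>" m] unfolding nu_eq_def by (simp add: mult_ac)
  show ?thesis
  proof (cases "m = 0")
    case True
    then show ?thesis using lm evaluation by (simp add: nu_eq_0_iff nu_less_0_iff)
  next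
    case False
    have "nu_less (\<eta> * m) (\<zeta> * m)"
      using eta_zeta nu_less_mult_left_iff[OF False] by (simp add: mult.commute)
    moreover have "\<not> (nu_less (\<eta> * m) l \<and> nu_less l (\<zeta> * m))"
      using no_nu_between_step[OF step, of "\<eta> * m" l] nu_less_cong[OF _ zeta_step, of l l]
        nz False mult_neq_0 by (simp add: nu_eq_def)
    ultimately show ?thesis
      using nu_four_cases[OF tangible_supersemifield_supertropical] evaluation by blast
  qed
qed

lemma add3_nu_le_square:
  assumes key: "nu_le (C * C) (A * (B::'a))"
  shows "nu_less B A \<Longrightarrow> A + B + C = A" and "nu_eq A B \<Longrightarrow> A + B + C = ee * B"
proof -
  have S: "supertropical TYPE('a)" by (rule tangible_supersemifield_supertropical)
  show "A + B + C = A" if BA: "nu_less B A"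
  proof -
    have "nu_less C A"
    proof (rule ccontr)
      assume "\<not> nu_less C A"
      then have "nu_le A C" using not_nu_less_iff[OF S] by blast
      have "A \<noteq> 0" using BA nu_less_0_iff(2) by blast
      then have "nu_less (A * B) (A * A)" using nu_less_mult_left_iff BA by blast
      also have "nu_le (A * A) (C * C)" using nu_le_square[OF \<open>nu_le A C\<close>] .
      finally show False using key not_nu_less_iff[OF S] by blast
    qed
    then have "B + C + A = A" by (rule add3_nu_less[OF S BA])
    then show ?thesis by (simp add: ac_simps)
  qed
  show "A + B + C = ee * B" if AB: "nu_eq A B"
  proof -
    have "nu_le C A"
    proof (rule ccontr)
      assume "\<not> nu_le C A"
      then have "nu_less A C" using not_nu_less_iff[OF S] by blast
      have "nu_eq (A * B) (A * A)" using nu_eq_mult_left[OF nu_eq_sym[OF AB]] .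
      then have "nu_less (A * B) (C * C)"
        using nu_less_square[OF \<open>nu_less A C\<close>] nu_less_cong[OF _ nu_eq_refl] by blast
      then show False using key not_nu_less_iff[OF S] by blast
    qed
    then have "nu_le C B" using AB unfolding nu_le_def nu_eq_def by simp
    then have "A + C + B = ee * B" by (rule add3_nu_eq[OF S AB])
    then show ?thesis by (simp add: ac_simps)
  qed
qed

lemma nu_square_if_nu_eq:
  assumes "(m::'a) \<noteq> 0" and "nu_eq (l^2 * a1) (m^2 * a2)"
  shows "nu_square (a1 * a2)"
proof -
  obtain s where s: "ee * (s * m) = ee" using ex_nu_inverse[OF assms(1)] by blast
  have "ee * (l * a1 * s)^2 = (ee * (l^2 * a1)) * (a1 * s^2)"
    by (simp add: power2_eq_square mult_ac)
  also have "\<dots> = (ee * (m^2 * a2)) * (a1 * s^2)" using assms(2) unfolding nu_eq_def by simp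
  also have "\<dots> = ee * (s * m) * (s * m) * (a1 * a2)" by (simp add: power2_eq_square mult_ac)
  also have "\<dots> = ee * (a1 * a2)" using s by simp
  finally have "nu_eq (a1 * a2) ((l * a1 * s)^2)" unfolding nu_eq_def by simp
  then show ?thesis unfolding nu_square_def by blast
qed

lemma binary_form_nu_le_discriminant:
  fixes a1 a2 a l m :: 'a
  assumes "a1 \<noteq> 0" and lm: "l \<noteq> 0 \<or> m \<noteq> 0" and disc: "nu_le (a^2) (a1 * a2)"
  defines "Q \<equiv> binary_form a1 a2 a l m"
  shows "(nu_less (m^2 * a2) (l^2 * a1) \<longrightarrow> Q = l^2 * a1) \<and>
    (nu_eq (l^2 * a1) (m^2 * a2) \<longrightarrow> Q = ee * l^2 * a1 \<and> Q = ee * m^2 * a2 \<and> nu_square (a1 * a2)) \<and>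
    (nu_less (l^2 * a1) (m^2 * a2) \<longrightarrow> Q = m^2 * a2)"
proof -
  define A B C where "A = l^2 * a1" and "B = m^2 * a2" and "C = l * m * a"
  have Q: "Q = A + B + C" by (simp add: Q_def A_def B_def C_def binary_form_def)
  have "nu_le ((l * m)^2 * a^2) ((l * m)^2 * (a1 * a2))" using nu_le_mult_left[OF disc] .
  then have key: "nu_le (C * C) (A * B)" "nu_le (C * C) (B * A)"
    by (simp_all add: A_def B_def C_def power2_eq_square mult_ac)
  have "Q = A" if "nu_less B A" using add3_nu_le_square(1)[OF key(1) that] Q by simp
  moreover have "Q = B" if "nu_less A B"
    using add3_nu_le_square(1)[OF key(2) that] Q by (simp add: ac_simps)
  moreover have "Q = ee * A \<and> Q = ee * B \<and> nu_square (a1 * a2)" if AB: "nu_eq A B"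
  proof -
    have "m \<noteq> 0"
    proof
      assume "m = 0"
      then have "l^2 * a1 = 0" using AB nu_eq_0_iff(1) by (simp add: A_def B_def)
      then show False using lm \<open>m = 0\<close> \<open>a1 \<noteq> 0\<close> power2_neq_0 mult_neq_0 by blast
    qed
    then have "nu_square (a1 * a2)" using nu_square_if_nu_eq AB by (simp add: A_def B_def)
    moreover have "Q = ee * B" using add3_nu_le_square(2)[OF key(1) AB] Q by simp
    ultimately show ?thesis using AB unfolding nu_eq_def by simp
  qed
  moreover have ee_AB: "ee * l^2 * a1 = ee * A" "ee * m^2 * a2 = ee * B"
    by (simp_all add: A_def B_def mult.assoc)
  ultimately show ?thesis unfolding ee_AB unfolding A_def B_def by blast
qed

end

theorem proposition3p4:
  fixes sm :: "'a::comm_semiring_1 \<Rightarrow> 'v::comm_monoid_add \<Rightarrow> 'v"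
    and q :: "'v \<Rightarrow> 'a" and b :: "'v \<Rightarrow> 'v \<Rightarrow> 'a"
    and x y :: 'v and \<zeta> \<eta> l m :: 'a
  assumes R: "tangible_supersemifield TYPE('a)"
    and V: "semimodule sm"
    and qb: "quadratic_pair sm q b"
    and nz: "q x \<noteq> 0" "q y \<noteq> 0" "b x y \<noteq> 0"
    and zeta: "\<zeta> \<in> tangibles" "nu_eq (b x y) (\<zeta> * q x)"
    and eta: "\<eta> \<in> tangibles" "nu_eq (q y) (\<eta> * b x y)"
    and lm: "l \<noteq> 0 \<or> m \<noteq> 0"
  shows
   "(let \<alpha>1 = q x; \<alpha>2 = q y; \<alpha> = b x y; Q = q (sm l x + sm m y) in
     (nu_less (\<alpha>1 * \<alpha>2) (\<alpha>^2) \<and>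
      \<not> (discrete TYPE('a) \<and> (\<exists>\<pi>. uniformizer \<pi> \<and> nu_eq (\<alpha>^2) (tinv \<pi> * \<alpha>1 * \<alpha>2))) \<longrightarrow>
        (nu_less (\<zeta> * m) l \<longrightarrow> Q = l^2 * \<alpha>1) \<and>
        (nu_eq l (\<zeta> * m) \<longrightarrow> Q = ee * l^2 * \<alpha>1 \<and> Q = ee * l * m * \<alpha>) \<and>
        (nu_less (\<eta> * m) l \<and> nu_less l (\<zeta> * m) \<longrightarrow> Q = l * m * \<alpha>) \<and>
        (nu_eq l (\<eta> * m) \<longrightarrow> Q = ee * m^2 * \<alpha>2 \<and> Q = ee * l * m * \<alpha>) \<and>
        (nu_less l (\<eta> * m) \<longrightarrow> Q = m^2 * \<alpha>2))
   \<and>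
     (discrete TYPE('a) \<and> (\<exists>\<pi>. uniformizer \<pi> \<and> nu_eq (\<alpha>^2) (tinv \<pi> * \<alpha>1 * \<alpha>2)) \<longrightarrow>
        (let P1 = nu_less (\<zeta> * m) l; P2 = nu_eq l (\<zeta> * m);
             P3 = nu_eq l (\<eta> * m); P4 = nu_less l (\<eta> * m) in
         (P1 \<or> P2 \<or> P3 \<or> P4) \<and>
         \<not> (P1 \<and> P2) \<and> \<not> (P1 \<and> P3) \<and> \<not> (P1 \<and> P4) \<and>
         \<not> (P2 \<and> P3) \<and> \<not> (P2 \<and> P4) \<and> \<not> (P3 \<and> P4) \<and>
         (P1 \<longrightarrow> Q = l^2 * \<alpha>1) \<and>
         (P2 \<longrightarrow> Q = ee * l^2 * \<alpha>1 \<and> Q = ee * l * m * \<alpha>) \<and>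
         (P3 \<longrightarrow> Q = ee * m^2 * \<alpha>2 \<and> Q = ee * l * m * \<alpha>) \<and>
         (P4 \<longrightarrow> Q = m^2 * \<alpha>2)))
   \<and>
     (nu_le (\<alpha>^2) (\<alpha>1 * \<alpha>2) \<longrightarrow>
        (nu_less (m^2 * \<alpha>2) (l^2 * \<alpha>1) \<longrightarrow> Q = l^2 * \<alpha>1) \<and>
        (nu_eq (l^2 * \<alpha>1) (m^2 * \<alpha>2) \<longrightarrow>
            Q = ee * l^2 * \<alpha>1 \<and> Q = ee * m^2 * \<alpha>2 \<and> nu_square (\<alpha>1 * \<alpha>2)) \<and>
        (nu_less (l^2 * \<alpha>1) (m^2 * \<alpha>2) \<longrightarrow> Q = m^2 * \<alpha>2)))"
proof -
  have tangible_nz: "\<zeta> \<noteq> 0" "\<eta> \<noteq> 0" using tangible_neq_0 zeta(1) eta(1) by blast+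
  have discriminant: "nu_less (q x * q y) ((b x y)^2) \<longleftrightarrow> nu_less \<eta> \<zeta>"
    using discriminant_nu_less_iff[OF R nz(1,3) zeta(2) eta(2)] .
  have step: "smallest_above_e (ee * tinv \<pi>)" if "uniformizer \<pi>" for \<pi> :: 'a
    using that unfolding uniformizer_def by simp
  show ?thesis
    unfolding Let_def quadratic_pair_add_smult[OF qb]
    using binary_form_eta_nu_less_zeta[OF R nz(1,3) tangible_nz zeta(2) eta(2) _ lm] discriminant
      binary_form_discrete[OF R nz(1,2,3) tangible_nz zeta(2) eta(2) lm step]
      binary_form_nu_le_discriminant[OF R nz(1) lm]
    by (meson mult.assoc)
qed

end
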